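(* Let $G$ and $H$ be finite simple graphs, let $n_2$ be the order of $H$, and let $u\in V(G)$, $v\in V(H)$. Then \[\mathrm{dp}_{G[H]}((u,v))=\big(\mathrm{dp}_G(u)\big)^{\curlywedge\times n_2}\,\mathrm{dp}(H)+x^{(\deg_G u)\,n_2}\,\mathrm{dp}_H(v).\]
   Context: For a vertex $w$ of a simple graph $\Gamma$, the degree polynomial $\mathrm{dp}_\Gamma(w)\in\mathbb{Z}[x]$ is the polynomial in which the coefficient of $x^{i}$ is the number of neighbors of $w$ in $\Gamma$ having degree $i$ in $\Gamma$ ($\mathrm{dp}_\Gamma(w)=0$ if $w$ is isolated). The degree polynomial of the graph $\Gamma$ is $\mathrm{dp}(\Gamma)=\sum_{i\ge0} t_i x^i$, where $t_i$ is the number of vertices of $\Gamma$ of degree $i$. For a polynomial $f=\sum_i a_i x^i$ with nonnegative integer coefficients and $n\in\mathbb{N}$, $f^{\curlywedge\times n}=\sum_i a_i x^{in}$ (and $0^{\curlywedge\times n}=0$). The lexicographic product $G[H]$ is the simple graph on $V(G)\times V(H)$ in which $(u_1,v_1)\sim(u_2,v_2)$ if and only if either $u_1\sim u_2$ in $G$, or $u_1=u_2$ and $v_1\sim v_2$ in $H$. *)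

theory Defs
  imports "HOL-Computational_Algebra.Polynomial"
begin

definition simple_graph :: "'a set \<Rightarrow> ('a \<Rightarrow> 'a \<Rightarrow> bool) \<Rightarrow> bool" where
  "simple_graph V E \<longleftrightarrow> finite V \<and> (\<forall>x y. E x y \<longrightarrow> x \<in> V \<and> y \<in> V)
     \<and> (\<forall>x y. E x y \<longrightarrow> E y x) \<and> (\<forall>x. \<not> E x x)"

definition nbhd :: "'a set \<Rightarrow> ('a \<Rightarrow> 'a \<Rightarrow> bool) \<Rightarrow> 'a \<Rightarrow> 'a set" where
  "nbhd V E w = {y \<in> V. E w y}"

definition deg :: "'a set \<Rightarrow> ('a \<Rightarrow> 'a \<Rightarrow> bool) \<Rightarrow> 'a \<Rightarrow> nat" where
  "deg V E w = card (nbhd V E w)"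

definition dp_vertex :: "'a set \<Rightarrow> ('a \<Rightarrow> 'a \<Rightarrow> bool) \<Rightarrow> 'a \<Rightarrow> nat poly" where
  "dp_vertex V E w = (\<Sum>y\<in>nbhd V E w. monom 1 (deg V E y))"

definition dp_graph :: "'a set \<Rightarrow> ('a \<Rightarrow> 'a \<Rightarrow> bool) \<Rightarrow> nat poly" where
  "dp_graph V E = (\<Sum>y\<in>V. monom 1 (deg V E y))"

text \<open>f^{curlywedge x n} = sum_i a_i x^(i n).\<close>
definition stretch :: "nat poly \<Rightarrow> nat \<Rightarrow> nat poly" where
  "stretch f n = (\<Sum>i\<le>degree f. monom (coeff f i) (i * n))"

definition lex_verts :: "'a set \<Rightarrow> 'b set \<Rightarrow> ('a \<times> 'b) set" where
  "lex_verts VG VH = VG \<times> VH"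

definition lex_edges :: "('a \<Rightarrow> 'a \<Rightarrow> bool) \<Rightarrow> ('b \<Rightarrow> 'b \<Rightarrow> bool)
    \<Rightarrow> ('a \<times> 'b) \<Rightarrow> ('a \<times> 'b) \<Rightarrow> bool" where
  "lex_edges EG EH p q \<longleftrightarrow> EG (fst p) (fst q) \<or> (fst p = fst q \<and> EH (snd p) (snd q))"

end

theory Submission
  imports Defs
begin

text \<open>The neighbourhood of \<open>(u, v)\<close> in \<open>G[H]\<close> is the disjoint union of \<open>N\<^sub>G(u) \<times> V(H)\<close>
  and \<open>{u} \<times> N\<^sub>H(v)\<close>, and every vertex \<open>(a, b)\<close> has degree \<open>deg\<^sub>G(a) n\<^sub>2 + deg\<^sub>H(b)\<close>.
  So each neighbour contributes the monomial \<open>x\<^bsup>deg\<^sub>G(a) n\<^sub>2\<^esup> x\<^bsup>deg\<^sub>H(b)\<^esup>\<close>; summing over the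
  first part gives the stretched \<open>dp\<^sub>G(u)\<close> times \<open>dp(H)\<close>, over the second part
  \<open>x\<^bsup>deg\<^sub>G(u) n\<^sub>2\<^esup> dp\<^sub>H(v)\<close>.\<close>

lemma stretch_conv_sum:
  assumes "degree f \<le> K"
  shows "stretch f n = (\<Sum>i\<le>K. monom (coeff f i) (i * n))"
  unfolding stretch_def
  by (rule sum.mono_neutral_left) (use assms in \<open>auto simp: coeff_eq_0\<close>)

lemma stretch_0 [simp]: "stretch 0 n = 0"
  by (simp add: stretch_def)

lemma stretch_add: "stretch (f + g) n = stretch f n + stretch g n"
proof -
  let ?K = "max (degree f) (degree g)"
  have "stretch (f + g) n = (\<Sum>i\<le>?K. monom (coeff (f + g) i) (i * n))"
    by (rule stretch_conv_sum) (auto intro: degree_add_le)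
  also have "\<dots> = (\<Sum>i\<le>?K. monom (coeff f i) (i * n)) + (\<Sum>i\<le>?K. monom (coeff g i) (i * n))"
    by (simp add: add_monom[symmetric] sum.distrib)
  also have "\<dots> = stretch f n + stretch g n"
    by (subst (1 2) stretch_conv_sum[symmetric]) auto
  finally show ?thesis .
qed

lemma stretch_sum: "stretch (\<Sum>a\<in>A. f a) n = (\<Sum>a\<in>A. stretch (f a) n)"
  by (induction A rule: infinite_finite_induct) (simp_all add: stretch_add)

lemma stretch_monom: "stretch (monom c d) n = monom c (d * n)"
proof -
  have "stretch (monom c d) n = (\<Sum>i\<le>d. monom (coeff (monom c d) i) (i * n))"
    by (rule stretch_conv_sum) (simp add: degree_monom_le)
  also have "\<dots> = (\<Sum>i\<le>d. if i = d then monom c (d * n) else 0)"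
    by (rule sum.cong) (auto simp: coeff_monom)
  also have "\<dots> = monom c (d * n)" by simp
  finally show ?thesis .
qed

lemma finite_nbhd: "simple_graph V E \<Longrightarrow> finite (nbhd V E w)"
  unfolding simple_graph_def nbhd_def by auto

lemma nbhd_subset: "nbhd V E w \<subseteq> V"
  by (auto simp: nbhd_def)

lemma not_in_nbhd_self: "simple_graph V E \<Longrightarrow> w \<notin> nbhd V E w"
  unfolding simple_graph_def nbhd_def by auto

lemma nbhd_lex_product:
  assumes "simple_graph VG EG" and "a \<in> VG"
  shows "nbhd (lex_verts VG VH) (lex_edges EG EH) (a, b)
       = (nbhd VG EG a \<times> VH) \<union> ({a} \<times> nbhd VH EH b)"
  using assms unfolding nbhd_def lex_verts_def lex_edges_def simple_graph_def by auto

lemma deg_lex_product: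
  assumes G: "simple_graph VG EG" and H: "simple_graph VH EH" and "a \<in> VG"
  shows "deg (lex_verts VG VH) (lex_edges EG EH) (a, b) = deg VG EG a * card VH + deg VH EH b"
proof -
  have "(nbhd VG EG a \<times> VH) \<inter> ({a} \<times> nbhd VH EH b) = {}"
    using not_in_nbhd_self[OF G] by auto
  moreover have "finite VH"
    using H by (simp add: simple_graph_def)
  ultimately show ?thesis
    unfolding deg_def nbhd_lex_product[OF G \<open>a \<in> VG\<close>]
    using finite_nbhd[OF G] finite_nbhd[OF H]
    by (simp add: card_Un_disjoint card_cartesian_product)
qed

lemma monom_deg_lex_product:
  assumes "simple_graph VG EG" and "simple_graph VH EH" and "a \<in> VG"
  shows "monom 1 (deg (lex_verts VG VH) (lex_edges EG EH) (a, b))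
       = monom 1 (deg VG EG a * card VH) * monom (1 :: nat) (deg VH EH b)"
  by (simp add: deg_lex_product[OF assms] mult_monom)

lemma sum_monom_deg_lex_product_outer:
  assumes G: "simple_graph VG EG" and H: "simple_graph VH EH"
  shows "(\<Sum>p\<in>nbhd VG EG u \<times> VH. monom 1 (deg (lex_verts VG VH) (lex_edges EG EH) p))
       = stretch (dp_vertex VG EG u) (card VH) * dp_graph VH EH"
proof -
  have split_monom: "monom 1 (deg (lex_verts VG VH) (lex_edges EG EH) (a, b))
      = monom 1 (deg VG EG a * card VH) * monom (1 :: nat) (deg VH EH b)"
    if "a \<in> nbhd VG EG u" for a b
    using G H subsetD[OF nbhd_subset that] by (rule monom_deg_lex_product)
  have "(\<Sum>p\<in>nbhd VG EG u \<times> VH. monom 1 (deg (lex_verts VG VH) (lex_edges EG EH) p))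
      = (\<Sum>a\<in>nbhd VG EG u. \<Sum>b\<in>VH.
           monom 1 (deg VG EG a * card VH) * monom (1 :: nat) (deg VH EH b))"
    unfolding sum.cartesian_product
    by (rule sum.cong) (auto simp: split_monom simp del: One_nat_def)
  then show ?thesis
    by (simp add: dp_vertex_def dp_graph_def stretch_sum stretch_monom sum_distrib_left
        sum_distrib_right sum.swap[of _ VH])
qed

lemma sum_monom_deg_lex_product_inner:
  assumes "simple_graph VG EG" and "simple_graph VH EH" and "u \<in> VG"
  shows "(\<Sum>p\<in>{u} \<times> nbhd VH EH v. monom 1 (deg (lex_verts VG VH) (lex_edges EG EH) p))
       = monom 1 (deg VG EG u * card VH) * dp_vertex VH EH v"
proof -
  have "{u} \<times> nbhd VH EH v = Pair u ` nbhd VH EH v" by auto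
  then show ?thesis
    by (simp add: sum.reindex inj_on_def dp_vertex_def sum_distrib_left
        monom_deg_lex_product[OF assms] del: One_nat_def)
qed

theorem theorem4p18:
  fixes VG :: "'a set" and EG :: "'a \<Rightarrow> 'a \<Rightarrow> bool"
    and VH :: "'b set" and EH :: "'b \<Rightarrow> 'b \<Rightarrow> bool"
  assumes "simple_graph VG EG" and "simple_graph VH EH"
    and "u \<in> VG" and "v \<in> VH"
  shows "dp_vertex (lex_verts VG VH) (lex_edges EG EH) (u, v)
         = stretch (dp_vertex VG EG u) (card VH) * dp_graph VH EH
           + monom 1 (deg VG EG u * card VH) * dp_vertex VH EH v"
proof -
  have "finite (nbhd VG EG u \<times> VH)" "finite ({u} \<times> nbhd VH EH v)"
    using finite_nbhd[OF assms(1)] finite_nbhd[OF assms(2)] assms(2)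
    by (auto simp: simple_graph_def)
  moreover have "(nbhd VG EG u \<times> VH) \<inter> ({u} \<times> nbhd VH EH v) = {}"
    using not_in_nbhd_self[OF assms(1)] by auto
  ultimately have "dp_vertex (lex_verts VG VH) (lex_edges EG EH) (u, v)
      = (\<Sum>p\<in>nbhd VG EG u \<times> VH. monom 1 (deg (lex_verts VG VH) (lex_edges EG EH) p))
        + (\<Sum>p\<in>{u} \<times> nbhd VH EH v. monom 1 (deg (lex_verts VG VH) (lex_edges EG EH) p))"
    unfolding dp_vertex_def[of "lex_verts VG VH"] nbhd_lex_product[OF assms(1,3)]
    by (rule sum.union_disjoint)
  then show ?thesis
    by (simp only: sum_monom_deg_lex_product_outer[OF assms(1,2)]
        sum_monom_deg_lex_product_inner[OF assms(1-3)])
qed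

end
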